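(* Let $r\ge1$, $\mathbf{m}\in\mathbb{N}^r$, $m=m_1+\cdots+m_r$, $\mathbf{f}\in\mathbb{C}^r$, $a,b\in\mathbb{C}$, and suppose $(b+1)\,\Pi_1\ne b\,\Pi_0$ and $(b-a+1)\,\Pi_1\ne b\,\Pi_0$, where $\Pi_1=\prod_{i=1}^r(f_i-b-1+m_i)$ and $\Pi_0=\prod_{i=1}^r(f_i-b-1)$. Then for $|x|<1$ $$ (1-x)^{a-1}{}_{r+2}F_{r+1}\!\left(\begin{matrix}a, b,\mathbf{f}+\mathbf{m}\\ b+2,\mathbf{f}\end{matrix}\,\middle|\, x\right) =\frac{(b+1)(\mathbf{f}-b)_{\mathbf{m}}-b(\mathbf{f}-b-1)_{\mathbf{m}}}{(\mathbf{f})_{\mathbf{m}}} {}_{3}F_{2}\!\left(\begin{matrix}1,b+1-a,\lambda^*+1\\ b+2,\lambda^*\end{matrix}\,\middle|\, x\right) +\sum_{l=0}^{m-1}\big[(b+1)Y_l(b,\mathbf{f},\mathbf{m})-bY_l(b+1,\mathbf{f},\mathbf{m})\big]\frac{(a)_lx^l}{(1-x)^{l+1}}, $$ where $$ \lambda^*=(b-a+1)\frac{(b+1)\Pi_1-b\,\Pi_0}{(b-a+1)\Pi_1-b\,\Pi_0}. $$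
   Context: $(a)_k=\Gamma(a+k)/\Gamma(a)$. For vectors: $(\mathbf{f}+\gamma)_{\mathbf{m}}=\prod_i(f_i+\gamma)_{m_i}$, $(\mathbf{f})_n=\prod_i(f_i)_n$, $\mathbf{f}+\mathbf{m}$ componentwise; a vector among hypergeometric parameters means its components are listed. ${}_pF_q(\cdot;\cdot;x)$ is the generalized hypergeometric function. For $\beta\in\mathbb{C}$: $W_{m-1}(\beta,\mathbf{f},\mathbf{m};n)=\frac{\beta((\mathbf{f}+n)_{\mathbf{m}}-(\mathbf{f}-\beta)_{\mathbf{m}})}{(\beta+n)(\mathbf{f})_{\mathbf{m}}}=\sum_{k=0}^{m-1}\delta_k(\beta)n^k$, and $Y_l(\beta,\mathbf{f},\mathbf{m})=\sum_{k=l}^{m-1}\delta_k(\beta)\mathbf{S}_k^{(l)}$ with $\mathbf{S}_k^{(l)}$ Stirling numbers of the second kind. Parameters are assumed such that all expressions are defined. *)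

theory Defs
  imports "HOL-Analysis.Analysis" "HOL-Computational_Algebra.Polynomial"
          "HOL-Combinatorics.Stirling"
begin

definition hyperF :: "complex list \<Rightarrow> complex list \<Rightarrow> complex \<Rightarrow> complex" where
  "hyperF as bs x = (\<Sum>n. (prod_list (map (\<lambda>a. pochhammer a n) as)
        / prod_list (map (\<lambda>c. pochhammer c n) bs)) * x ^ n / fact n)"

definition vpoch :: "nat \<Rightarrow> (nat \<Rightarrow> complex) \<Rightarrow> (nat \<Rightarrow> nat) \<Rightarrow> complex" where
  "vpoch r g m = (\<Prod>i<r. pochhammer (g i) (m i))"

text \<open>W_{m-1}(beta,f,m;n) as a polynomial in n:
  beta((f+n)_m - (f-beta)_m) / ((beta+n)(f)_m); the numerator vanishes at n = -beta,
  so the division by (n + beta) is exact.\<close>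
definition Wpoly :: "nat \<Rightarrow> complex \<Rightarrow> (nat \<Rightarrow> complex) \<Rightarrow> (nat \<Rightarrow> nat) \<Rightarrow> complex poly" where
  "Wpoly r \<beta> f m =
     smult (\<beta> / vpoch r f m)
       (((\<Prod>i<r. \<Prod>j<m i. [:f i + of_nat j, 1:]) - [:vpoch r (\<lambda>i. f i - \<beta>) m:])
          div [:\<beta>, 1:])"

definition delta :: "nat \<Rightarrow> complex \<Rightarrow> (nat \<Rightarrow> complex) \<Rightarrow> (nat \<Rightarrow> nat) \<Rightarrow> nat \<Rightarrow> complex" where
  "delta r \<beta> f m k = coeff (Wpoly r \<beta> f m) k"

definition Y :: "nat \<Rightarrow> nat \<Rightarrow> complex \<Rightarrow> (nat \<Rightarrow> complex) \<Rightarrow> (nat \<Rightarrow> nat) \<Rightarrow> complex" where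
  "Y r l \<beta> f m = (\<Sum>k\<in>{l..<(\<Sum>i<r. m i)}. delta r \<beta> f m k * of_nat (Stirling k l))"

end

theory Submission
  imports Defs "HOL-Computational_Algebra.Formal_Power_Series"
begin

unbundle no vec_syntax
unbundle fps_syntax

text \<open>
  The coefficient of x^n on the left is (a)_n/n! (b)_n/(b+2)_n (f+n)_m/(f)_m. Splitting
  (b)_n/(b+2)_n = (b+1) (b)_n/(b+1)_n - b (b+1)_n/(b+2)_n and dividing the polynomial
  (f+n)_m by beta+n with remainder (the quotient is W_(m-1)) separates a polynomial part,
  summed with the Stirling expansion n^k = sum_l S(k,l) n(n-1)...(n-l+1), from two series
  2F1(a, beta; beta+1). Euler's transformation turns these into (1-x)^(1-a) 2F1(1, beta+1-a; beta+1),
  and the defining property of lambda* makes their combination collapse to a single 3F2.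
  The whole identity is proved for formal power series and only evaluated at x at the end.
  For b = -1 the splitting breaks down, but then the left-hand series is a polynomial of degree one.
\<close>

section \<open>Hypergeometric power series\<close>

lemma pochhammer_nonzero:
  "(\<And>n. (c::complex) \<noteq> - of_nat n) \<Longrightarrow> pochhammer c k \<noteq> 0"
  by (auto simp: pochhammer_eq_0_iff)

lemma add_of_nat_nonzero:
  "(\<And>n. (c::complex) \<noteq> - of_nat n) \<Longrightarrow> c + of_nat k \<noteq> 0"
  by (metis add.inverse_unique add.commute)

lemma plus_1_neq_minus_of_nat:
  fixes b :: complex
  assumes "b \<noteq> - 1" and "\<And>n. b + 2 \<noteq> - of_nat n"
  shows "b + 1 \<noteq> - of_nat n"
proof (cases n)
  case 0
  then show ?thesis
    using assms(1) by (auto simp: eq_neg_iff_add_eq_0)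
next
  case (Suc k)
  show ?thesis
  proof
    assume "b + 1 = - of_nat n"
    then have "b + 2 = - of_nat k"
      using Suc by (simp add: algebra_simps eq_neg_iff_add_eq_0)
    then show False
      using assms(2) by blast
  qed
qed

lemma pochhammer_shift_mult:
  "(z + of_nat n) * pochhammer z n = z * pochhammer (z + 1) n"
  by (metis pochhammer_rec pochhammer_rec')

lemma pochhammer_plus_1_eq:
  "(z::complex) \<noteq> 0 \<Longrightarrow> pochhammer (z + 1) n = (z + of_nat n) / z * pochhammer z n"
  using pochhammer_shift_mult[of z n] by (simp add: field_simps)

lemma pochhammer_ratio_split:
  fixes b :: complex
  assumes "pochhammer (b + 1) n \<noteq> 0" and "pochhammer (b + 2) n \<noteq> 0"
  shows "pochhammer b n / pochhammer (b + 2) n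
       = (b + 1) * (pochhammer b n / pochhammer (b + 1) n)
           - b * (pochhammer (b + 1) n / pochhammer (b + 2) n)"
proof -
  define p Q S where "p = pochhammer b n" and "Q = pochhammer (b + 1) n" and "S = pochhammer (b + 2) n"
  have Q: "(b + 1) * S = (b + 1 + of_nat n) * Q"
    using pochhammer_shift_mult[of "b + 1" n] by (simp add: S_def Q_def add.assoc)
  have p: "b * Q = (b + of_nat n) * p"
    using pochhammer_shift_mult[of b n] by (simp add: p_def Q_def)
  have "Q \<noteq> 0" "S \<noteq> 0"
    using assms by (simp_all add: Q_def S_def)
  have "(b + 1) * (p / Q) - b * (Q / S) = ((b + 1) * S * p - b * Q * Q) / (Q * S)"
    using \<open>Q \<noteq> 0\<close> \<open>S \<noteq> 0\<close> by (simp add: field_simps)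
  also have "\<dots> = ((b + 1 + of_nat n) * p - (b + of_nat n) * p) * Q / (Q * S)"
    unfolding Q p by (simp add: algebra_simps)
  also have "\<dots> = p / S"
    using \<open>Q \<noteq> 0\<close> by (simp add: algebra_simps)
  finally show ?thesis
    unfolding p_def Q_def S_def ..
qed

lemma prod_list_pochhammer_Suc:
  "prod_list (map (\<lambda>a. pochhammer a (Suc n)) as)
     = prod_list (map (\<lambda>a. pochhammer a n) as) * prod_list (map (\<lambda>a. a + of_nat n) as)"
  by (induction as) (simp_all add: pochhammer_rec' mult_ac)

definition hyper_fps :: "complex list \<Rightarrow> complex list \<Rightarrow> complex fps" where
  "hyper_fps as bs = Abs_fps (\<lambda>n. prod_list (map (\<lambda>a. pochhammer a n) as)
        / prod_list (map (\<lambda>c. pochhammer c n) bs) / fact n)"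

lemma hyper_fps_nth:
  "hyper_fps as bs $ n = prod_list (map (\<lambda>a. pochhammer a n) as)
        / prod_list (map (\<lambda>c. pochhammer c n) bs) / fact n"
  by (simp add: hyper_fps_def)

lemma hyperF_conv_hyper_fps: "hyperF as bs x = (\<Sum>n. hyper_fps as bs $ n * x ^ n)"
  by (simp add: hyperF_def hyper_fps_nth)

lemma hyper_fps_Cons_1_nth:
  "hyper_fps (1 # as) bs $ n = prod_list (map (\<lambda>a. pochhammer a n) as)
        / prod_list (map (\<lambda>c. pochhammer c n) bs)"
  by (simp add: hyper_fps_nth pochhammer_fact[symmetric])

lemma hyper_fps_1_0_nth [simp]: "hyper_fps [s] [] $ n = pochhammer s n / fact n"
  by (simp add: hyper_fps_nth)

lemma hyper_fps_1_0_conv_fps_binomial: "hyper_fps [s] [] = fps_binomial (- s) oo - fps_X"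
proof (rule fps_ext)
  fix n
  have "(-1::complex) ^ n * (-1) ^ n = 1"
    by (simp add: power_mult_distrib[symmetric])
  then show "hyper_fps [s] [] $ n = (fps_binomial (- s) oo - fps_X) $ n"
    by (simp add: fps_compose_uminus' gbinomial_pochhammer)
qed

lemma hyper_fps_1_0_mult: "hyper_fps [s] [] * hyper_fps [t] [] = hyper_fps [s + t] []"
  unfolding hyper_fps_1_0_conv_fps_binomial
  by (simp add: fps_compose_mult_distrib[symmetric] fps_binomial_add_mult[symmetric] add.commute)

lemma hyper_fps_1_0_zero: "hyper_fps [0] [] = 1"
  by (simp add: hyper_fps_1_0_conv_fps_binomial)

lemma one_minus_X_mult_hyper_fps_1_0: "(1 - fps_X) * hyper_fps [s] [] = hyper_fps [s - 1] []"
proof -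
  have "1 - fps_X = hyper_fps [- 1] []"
    by (simp add: hyper_fps_1_0_conv_fps_binomial fps_binomial_1 fps_compose_add_distrib)
  then show ?thesis
    by (simp add: hyper_fps_1_0_mult)
qed

lemma fps_deriv_hyper_fps_1_0: "fps_deriv (hyper_fps [s] []) = fps_const s * hyper_fps [s + 1] []"
proof (rule fps_ext)
  fix n
  have "fps_deriv (hyper_fps [s] []) $ n
      = of_nat (Suc n) * (s * pochhammer (s + 1) n) / (of_nat (Suc n) * fact n)"
    by (simp add: pochhammer_rec)
  then show "fps_deriv (hyper_fps [s] []) $ n = (fps_const s * hyper_fps [s + 1] []) $ n"
    by (simp del: of_nat_Suc)
qed

section \<open>Convergence\<close>

lemma tendsto_shifted_ratio:
  "((\<lambda>n. ((\<alpha>::complex) + of_nat n) / (\<beta> + of_nat n)) \<longlongrightarrow> 1) sequentially"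
proof -
  have "filterlim (\<lambda>n. \<beta> + of_nat n :: complex) at_infinity sequentially"
    by (rule tendsto_add_filterlim_at_infinity[OF tendsto_const tendsto_of_nat])
  then have "((\<lambda>n. 1 + (\<alpha> - \<beta>) / (\<beta> + of_nat n)) \<longlongrightarrow> 1 + 0) sequentially"
    by (intro tendsto_add tendsto_const tendsto_divide_0[OF tendsto_const])
  then have lim: "((\<lambda>n. 1 + (\<alpha> - \<beta>) / (\<beta> + of_nat n)) \<longlongrightarrow> 1) sequentially"
    by simp
  have "eventually (\<lambda>n. norm \<beta> < real n) sequentially"
    using eventually_gt_at_top[of "nat \<lceil>norm \<beta>\<rceil>"] by eventually_elim linarith
  then have "eventually (\<lambda>n. \<beta> + of_nat n \<noteq> (0::complex)) sequentially"
    by eventually_elim (metis add.inverse_unique norm_minus_cancel norm_of_nat order_less_irrefl)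
  then have "eventually (\<lambda>n. 1 + (\<alpha> - \<beta>) / (\<beta> + of_nat n) = (\<alpha> + of_nat n) / (\<beta> + of_nat n))
      sequentially"
    by eventually_elim (simp add: field_simps)
  then show ?thesis
    by (rule Lim_transform_eventually[OF lim])
qed

lemma tendsto_prod_list_shifted_ratio:
  "length as = length cs \<Longrightarrow>
     ((\<lambda>n. prod_list (map (\<lambda>a. a + of_nat n) as) / prod_list (map (\<lambda>c. c + of_nat n) cs))
        \<longlongrightarrow> (1::complex)) sequentially"
proof (induction as cs rule: list_induct2)
  case Nil
  then show ?case by simp
next
  case (Cons a as c cs)
  then show ?case
    using tendsto_mult[OF tendsto_shifted_ratio[of a c] Cons.IH] by simp
qed

lemma summable_norm_ratio_tendsto_1:
  fixes c \<rho> :: "nat \<Rightarrow> complex"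
  assumes rec: "\<And>n. c (Suc n) = \<rho> n * c n" and lim: "(\<rho> \<longlongrightarrow> 1) sequentially"
    and x: "norm x < 1"
  shows "summable (\<lambda>n. norm (c n * x ^ n))"
proof -
  define q where "q = (1 + norm x) / 2"
  have "q < 1" "norm x < q"
    using x by (simp_all add: q_def)
  have "eventually (\<lambda>n. norm (\<rho> n) * norm x \<le> q) sequentially"
  proof (cases "x = 0")
    case False
    have "((\<lambda>n. norm (\<rho> n) * norm x) \<longlongrightarrow> norm (1::complex) * norm x) sequentially"
      by (intro tendsto_intros lim)
    then have "eventually (\<lambda>n. norm (\<rho> n) * norm x < q) sequentially"
      using \<open>norm x < q\<close> by (intro order_tendstoD(2)) simp_all
    then show ?thesis
      by (auto elim: eventually_mono)
  qed (use \<open>q < 1\<close> q_def in simp)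
  then obtain N where N: "\<And>n. n \<ge> N \<Longrightarrow> norm (\<rho> n) * norm x \<le> q"
    unfolding eventually_sequentially by blast
  show ?thesis
  proof (rule summable_ratio_test[OF \<open>q < 1\<close>])
    fix n assume "n \<ge> N"
    have "norm (norm (c (Suc n) * x ^ Suc n)) = (norm (\<rho> n) * norm x) * norm (c n * x ^ n)"
      by (simp add: rec norm_mult norm_power mult_ac)
    also have "\<dots> \<le> q * norm (norm (c n * x ^ n))"
      using N[OF \<open>n \<ge> N\<close>] by (simp add: mult_right_mono)
    finally show "norm (norm (c (Suc n) * x ^ Suc n)) \<le> q * norm (norm (c n * x ^ n))" .
  qed
qed

lemma summable_norm_hyper_fps:
  assumes len: "length as = Suc (length bs)"
    and poles: "\<And>c n. c \<in> set bs \<Longrightarrow> c \<noteq> - of_nat n" and x: "norm x < 1"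
  shows "summable (\<lambda>n. norm (hyper_fps as bs $ n * x ^ n))"
proof (rule summable_norm_ratio_tendsto_1[OF _ _ x])
  \<comment> \<open>The extra factor 1 + n in the denominator comes from the n! in the coefficients.\<close>
  define \<rho> where "\<rho> n = prod_list (map (\<lambda>a. a + of_nat n) as)
                      / prod_list (map (\<lambda>c. c + of_nat n) (bs @ [1]))" for n
  show "(\<rho> \<longlongrightarrow> 1) sequentially"
    unfolding \<rho>_def by (rule tendsto_prod_list_shifted_ratio) (simp add: len)
  show "hyper_fps as bs $ Suc n = \<rho> n * hyper_fps as bs $ n" for n
  proof -
    have "prod_list (map (\<lambda>c. pochhammer c n) bs) \<noteq> 0"
      "prod_list (map (\<lambda>c. c + of_nat n) bs) \<noteq> 0"
      using poles by (auto simp: prod_list_zero_iff pochhammer_nonzero add_of_nat_nonzero)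
    then show ?thesis
      by (simp add: hyper_fps_nth \<rho>_def prod_list_pochhammer_Suc field_simps)
  qed
qed

lemma hyper_fps_1_0_sums:
  assumes "norm x < 1"
  shows "(\<lambda>n. hyper_fps [s] [] $ n * x ^ n) sums ((1 - x) powr (- s))"
proof -
  have "norm (- x) < 1"
    using assms by simp
  from gen_binomial_complex[OF this, of "- s"]
  have "(\<lambda>n. ((- s) gchoose n) * (- x) ^ n) sums ((1 - x) powr (- s))"
    by simp
  moreover have "((- s) gchoose n) * (- x) ^ n = hyper_fps [s] [] $ n * x ^ n" for n
  proof -
    have "(-1::complex) ^ n * (-1) ^ n = 1"
      by (simp add: power_mult_distrib[symmetric])
    then show ?thesis
      by (simp add: gbinomial_pochhammer power_minus[of x] mult_ac)
  qed
  ultimately show ?thesis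
    by simp
qed

lemma fps_mult_sums:
  fixes F G :: "complex fps"
  assumes "summable (\<lambda>n. norm (F $ n * x ^ n))" and "summable (\<lambda>n. norm (G $ n * x ^ n))"
  shows "(\<lambda>n. (F * G) $ n * x ^ n) sums ((\<Sum>n. F $ n * x ^ n) * (\<Sum>n. G $ n * x ^ n))"
proof -
  have "(\<Sum>i\<le>k. F $ i * x ^ i * (G $ (k - i) * x ^ (k - i))) = (F * G) $ k * x ^ k" for k
  proof -
    have "(\<Sum>i\<le>k. F $ i * x ^ i * (G $ (k - i) * x ^ (k - i))) = (\<Sum>i\<le>k. F $ i * G $ (k - i) * x ^ k)"
      by (intro sum.cong refl) (simp add: mult_ac flip: power_add)
    then show ?thesis
      by (simp add: fps_mult_nth sum_distrib_right atLeast0AtMost)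
  qed
  then show ?thesis
    using Cauchy_product_sums[OF assms] by simp
qed

section \<open>Euler's transformation\<close>

lemma fps_X_mult_fps_deriv_nth: "(fps_X * fps_deriv F) $ n = of_nat n * F $ n"
  by (cases n) (simp_all add: algebra_simps)

lemma fps_euler_operator_nth:
  "(fps_X * fps_deriv F + fps_const \<beta> * F) $ n = (of_nat n + \<beta>) * F $ n"
  by (simp only: fps_add_nth fps_X_mult_fps_deriv_nth fps_mult_left_const_nth distrib_right)

lemma fps_eq_if_euler_ode:
  fixes F G :: "complex fps"
  assumes ode: "fps_X * fps_deriv F + fps_const \<beta> * F = fps_X * fps_deriv G + fps_const \<beta> * G"
    and init: "F $ 0 = G $ 0" and \<beta>: "\<And>n. \<beta> + 1 \<noteq> - of_nat n"
  shows "F = G"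
proof (rule fps_ext)
  fix n
  have eq: "(of_nat n + \<beta>) * F $ n = (of_nat n + \<beta>) * G $ n"
    using arg_cong[OF ode, of "\<lambda>H. H $ n"] by (simp only: fps_euler_operator_nth)
  show "F $ n = G $ n"
  proof (cases n)
    case (Suc k)
    have "of_nat n + \<beta> \<noteq> 0"
      using add_of_nat_nonzero[OF \<beta>, of k] by (simp add: Suc algebra_simps)
    then show ?thesis
      using eq by simp
  qed (simp add: init)
qed

lemma hyper_fps_2_1_euler_ode:
  assumes "\<And>n. \<beta> + 1 \<noteq> - of_nat n"
  shows "fps_X * fps_deriv (hyper_fps [a, \<beta>] [\<beta> + 1]) + fps_const \<beta> * hyper_fps [a, \<beta>] [\<beta> + 1]
           = fps_const \<beta> * hyper_fps [a] []"
proof (rule fps_ext)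
  fix n
  have "pochhammer (\<beta> + 1) n \<noteq> 0"
    using assms by (rule pochhammer_nonzero)
  have "(of_nat n + \<beta>) * hyper_fps [a, \<beta>] [\<beta> + 1] $ n
      = pochhammer a n / fact n * ((\<beta> + of_nat n) * pochhammer \<beta> n) / pochhammer (\<beta> + 1) n"
    by (simp add: hyper_fps_nth field_simps)
  also have "\<dots> = \<beta> * (pochhammer a n / fact n)"
    using \<open>pochhammer (\<beta> + 1) n \<noteq> 0\<close> by (simp add: pochhammer_shift_mult)
  finally show "(fps_X * fps_deriv (hyper_fps [a, \<beta>] [\<beta> + 1]) + fps_const \<beta> * hyper_fps [a, \<beta>] [\<beta> + 1]) $ n
      = (fps_const \<beta> * hyper_fps [a] []) $ n"
    by (simp only: fps_euler_operator_nth fps_mult_left_const_nth hyper_fps_1_0_nth)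
qed

lemma hyper_fps_euler_image_ode:
  fixes a \<beta> :: complex
  defines "U \<equiv> hyper_fps [1, \<beta> + 1 - a] [\<beta> + 1]"
  assumes \<beta>: "\<And>n. \<beta> + 1 \<noteq> - of_nat n"
  shows "(1 - fps_X) * (fps_X * fps_deriv U + fps_const \<beta> * U) + fps_const (a - 1) * (fps_X * U)
           = fps_const \<beta>"
proof (rule fps_ext)
  fix n
  have U_nth: "U $ k = pochhammer (\<beta> + 1 - a) k / pochhammer (\<beta> + 1) k" for k
    by (simp add: U_def hyper_fps_Cons_1_nth)
  have U_Suc: "(of_nat (Suc k) + \<beta>) * U $ Suc k = (\<beta> + 1 - a + of_nat k) * U $ k" for k
  proof -
    have "\<beta> + 1 + of_nat k \<noteq> 0"
      using \<beta> by (rule add_of_nat_nonzero)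
    have "(of_nat (Suc k) + \<beta>) * U $ Suc k
        = (\<beta> + 1 + of_nat k) * ((\<beta> + 1 - a + of_nat k) * pochhammer (\<beta> + 1 - a) k)
            / ((\<beta> + 1 + of_nat k) * pochhammer (\<beta> + 1) k)"
      by (simp add: U_nth pochhammer_rec' algebra_simps)
    also have "\<dots> = (\<beta> + 1 - a + of_nat k) * U $ k"
      using \<open>\<beta> + 1 + of_nat k \<noteq> 0\<close> by (simp add: U_nth)
    finally show ?thesis .
  qed
  show "((1 - fps_X) * (fps_X * fps_deriv U + fps_const \<beta> * U) + fps_const (a - 1) * (fps_X * U)) $ n
      = fps_const \<beta> $ n"
  proof (cases n)
    case 0
    then show ?thesis by (simp add: U_nth)
  next
    case (Suc k)
    then show ?thesis
      using U_Suc[of k] by (simp add: fps_X_mult_fps_deriv_nth algebra_simps)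
  qed
qed

lemma hyper_fps_euler_transform:
  assumes "\<And>n. \<beta> + 1 \<noteq> - of_nat n"
  shows "hyper_fps [a, \<beta>] [\<beta> + 1] = hyper_fps [a - 1] [] * hyper_fps [1, \<beta> + 1 - a] [\<beta> + 1]"
  \<comment> \<open>Both sides solve X F' + beta F = beta (1 - X)^(-a) and have constant term 1.\<close>
proof (rule fps_eq_if_euler_ode[OF _ _ assms])
  define U where "U = hyper_fps [1, \<beta> + 1 - a] [\<beta> + 1]"
  have deriv: "fps_deriv (hyper_fps [a - 1] []) = fps_const (a - 1) * hyper_fps [a] []"
    using fps_deriv_hyper_fps_1_0[of "a - 1"] by simp
  have shift: "hyper_fps [a - 1] [] = (1 - fps_X) * hyper_fps [a] []"
    by (simp add: one_minus_X_mult_hyper_fps_1_0)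
  have "fps_X * fps_deriv (hyper_fps [a - 1] [] * U) + fps_const \<beta> * (hyper_fps [a - 1] [] * U)
      = fps_X * (fps_const (a - 1) * hyper_fps [a] []) * U
          + hyper_fps [a - 1] [] * (fps_X * fps_deriv U + fps_const \<beta> * U)"
    by (simp add: fps_deriv_mult deriv algebra_simps)
  also have "\<dots> = hyper_fps [a] [] * ((1 - fps_X) * (fps_X * fps_deriv U + fps_const \<beta> * U)
                            + fps_const (a - 1) * (fps_X * U))"
    unfolding shift by (simp add: algebra_simps)
  also have "\<dots> = fps_const \<beta> * hyper_fps [a] []"
    unfolding U_def hyper_fps_euler_image_ode[OF assms] by (simp add: mult.commute)
  finally show "fps_X * fps_deriv (hyper_fps [a, \<beta>] [\<beta> + 1]) + fps_const \<beta> * hyper_fps [a, \<beta>] [\<beta> + 1]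
      = fps_X * fps_deriv (hyper_fps [a - 1] [] * U) + fps_const \<beta> * (hyper_fps [a - 1] [] * U)"
    using hyper_fps_2_1_euler_ode[OF assms] by simp
  show "hyper_fps [a, \<beta>] [\<beta> + 1] $ 0 = (hyper_fps [a - 1] [] * U) $ 0"
    by (simp add: U_def hyper_fps_nth)
qed

section \<open>The polynomial part\<close>

definition ffact :: "'a::comm_ring_1 \<Rightarrow> nat \<Rightarrow> 'a" where
  "ffact x l = (\<Prod>j<l. x - of_nat j)"

lemma ffact_0 [simp]: "ffact x 0 = 1"
  by (simp add: ffact_def)

lemma ffact_Suc: "ffact x (Suc l) = ffact x l * (x - of_nat l)"
  by (simp add: ffact_def)

lemma power_eq_sum_Stirling_ffact:
  "x ^ k = (\<Sum>l\<le>k. of_nat (Stirling k l) * ffact x l)"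
proof (induction k)
  case 0
  then show ?case by simp
next
  case (Suc k)
  have shift: "(\<Sum>l\<le>k. of_nat (Suc l) * of_nat (Stirling k (Suc l)) * ffact x (Suc l))
      = (\<Sum>l\<le>k. of_nat l * of_nat (Stirling k l) * ffact x l)"
    using sum.atMost_Suc_shift[of "\<lambda>l. of_nat l * of_nat (Stirling k l) * ffact x l" k] by simp
  have "(\<Sum>l\<le>Suc k. of_nat (Stirling (Suc k) l) * ffact x l)
      = (\<Sum>l\<le>k. of_nat (Stirling (Suc k) (Suc l)) * ffact x (Suc l))"
    by (subst sum.atMost_Suc_shift) simp
  also have "\<dots> = (\<Sum>l\<le>k. of_nat (Suc l) * of_nat (Stirling k (Suc l)) * ffact x (Suc l))
                 + (\<Sum>l\<le>k. of_nat (Stirling k l) * ffact x (Suc l))"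
    by (simp add: sum.distrib algebra_simps)
  also have "\<dots> = (\<Sum>l\<le>k. of_nat (Stirling k l) * (of_nat l * ffact x l + ffact x (Suc l)))"
    unfolding shift by (simp add: sum.distrib algebra_simps)
  also have "\<dots> = (\<Sum>l\<le>k. of_nat (Stirling k l) * ffact x l) * x"
    by (simp add: sum_distrib_left sum_distrib_right ffact_Suc algebra_simps)
  finally show ?case
    using Suc by simp
qed

lemma ffact_of_nat_mult_fact:
  "l \<le> N \<Longrightarrow> ffact (of_nat N) l * fact (N - l) = (fact N :: 'a::{comm_ring_1,semiring_char_0})"
proof (induction l)
  case (Suc l)
  have "N - l = Suc (N - Suc l)"
    using Suc.prems by simp
  then have "fact (N - l) = of_nat (N - l) * (fact (N - Suc l) :: 'a)"
    by (metis fact_Suc)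
  then show ?case
    using Suc by (simp add: ffact_Suc of_nat_diff mult_ac)
qed simp

lemma ffact_of_nat_eq_0: "N < l \<Longrightarrow> ffact (of_nat N) l = 0"
  unfolding ffact_def by (rule prod_zero) auto

lemma poly_eq_sum_Stirling_ffact:
  fixes p :: "'a::comm_ring_1 poly"
  assumes "\<And>k. k \<ge> M \<Longrightarrow> coeff p k = 0"
  shows "poly p x = (\<Sum>l<M. (\<Sum>k=l..<M. coeff p k * of_nat (Stirling k l)) * ffact x l)"
proof -
  have "poly p x = (\<Sum>k<max M (Suc (degree p)). coeff p k * x ^ k)"
    by (simp add: poly_altdef) (rule sum.mono_neutral_left; auto simp: coeff_eq_0)
  also have "\<dots> = (\<Sum>k<M. coeff p k * x ^ k)"
    by (rule sum.mono_neutral_right) (auto simp: assms)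
  also have "\<dots> = (\<Sum>k<M. \<Sum>l<M. coeff p k * of_nat (Stirling k l) * ffact x l)"
  proof (rule sum.cong[OF refl])
    fix k assume "k \<in> {..<M}"
    then have "(\<Sum>l<M. of_nat (Stirling k l) * ffact x l) = (\<Sum>l\<le>k. of_nat (Stirling k l) * ffact x l)"
      by (intro sum.mono_neutral_right) auto
    then have "coeff p k * x ^ k = coeff p k * (\<Sum>l<M. of_nat (Stirling k l) * ffact x l)"
      by (simp add: power_eq_sum_Stirling_ffact[of x k])
    then show "coeff p k * x ^ k = (\<Sum>l<M. coeff p k * of_nat (Stirling k l) * ffact x l)"
      by (simp add: sum_distrib_left mult.assoc)
  qed
  also have "\<dots> = (\<Sum>l<M. \<Sum>k<M. coeff p k * of_nat (Stirling k l) * ffact x l)"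
    by (rule sum.swap)
  also have "\<dots> = (\<Sum>l<M. (\<Sum>k=l..<M. coeff p k * of_nat (Stirling k l)) * ffact x l)"
  proof (rule sum.cong[OF refl])
    fix l
    have "(\<Sum>k<M. coeff p k * of_nat (Stirling k l)) = (\<Sum>k=l..<M. coeff p k * of_nat (Stirling k l))"
      by (rule sum.mono_neutral_right) auto
    then show "(\<Sum>k<M. coeff p k * of_nat (Stirling k l) * ffact x l)
        = (\<Sum>k=l..<M. coeff p k * of_nat (Stirling k l)) * ffact x l"
      by (metis sum_distrib_right)
  qed
  finally show ?thesis .
qed

lemma hyper_fps_1_0_ffact_sums:
  assumes "norm x < 1"
  shows "(\<lambda>n. hyper_fps [a] [] $ n * ffact (of_nat n) l * x ^ n)
           sums (pochhammer a l * x ^ l * (1 - x) powr (- (a + of_nat l)))"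
proof -
  have shift: "hyper_fps [a] [] $ (n + l) * ffact (of_nat (n + l)) l
      = pochhammer a l * hyper_fps [a + of_nat l] [] $ n" for n
  proof -
    have "ffact (of_nat (n + l)) l = fact (n + l) / (fact n :: complex)"
      using ffact_of_nat_mult_fact[of l "n + l"] by (simp add: field_simps)
    then show ?thesis
      by (simp add: pochhammer_product' add.commute[of n l])
  qed
  have "(\<lambda>n. pochhammer a l * x ^ l * (hyper_fps [a + of_nat l] [] $ n * x ^ n))
      sums (pochhammer a l * x ^ l * (1 - x) powr (- (a + of_nat l)))"
    by (intro sums_mult hyper_fps_1_0_sums assms)
  moreover have "(\<lambda>n. hyper_fps [a] [] $ (n + l) * ffact (of_nat (n + l)) l * x ^ (n + l))
      = (\<lambda>n. pochhammer a l * x ^ l * (hyper_fps [a + of_nat l] [] $ n * x ^ n))"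
    unfolding shift power_add by (simp only: mult_ac)
  ultimately have "(\<lambda>n. hyper_fps [a] [] $ (n + l) * ffact (of_nat (n + l)) l * x ^ (n + l))
      sums (pochhammer a l * x ^ l * (1 - x) powr (- (a + of_nat l)))"
    by (simp only:)
  then show ?thesis
    by (subst (asm) sums_zero_iff_shift) (auto simp: ffact_of_nat_eq_0)
qed

definition pochhammer_poly_fps :: "complex \<Rightarrow> complex poly \<Rightarrow> complex fps" where
  "pochhammer_poly_fps a p = Abs_fps (\<lambda>n. hyper_fps [a] [] $ n * poly p (of_nat n))"

lemma pochhammer_poly_fps_sums:
  assumes "norm x < 1" and "\<And>k. k \<ge> M \<Longrightarrow> coeff p k = 0"
  shows "(\<lambda>n. pochhammer_poly_fps a p $ n * x ^ n)
           sums (\<Sum>l<M. (\<Sum>k=l..<M. coeff p k * of_nat (Stirling k l))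
                         * pochhammer a l * x ^ l * (1 - x) powr (- (a + of_nat l)))"
proof -
  define c where "c l = (\<Sum>k=l..<M. coeff p k * of_nat (Stirling k l))" for l
  have "(\<lambda>n. \<Sum>l<M. c l * (hyper_fps [a] [] $ n * ffact (of_nat n) l * x ^ n))
      sums (\<Sum>l<M. c l * (pochhammer a l * x ^ l * (1 - x) powr (- (a + of_nat l))))"
    by (intro sums_sum sums_mult hyper_fps_1_0_ffact_sums assms(1))
  moreover have "pochhammer_poly_fps a p $ n * x ^ n
      = (\<Sum>l<M. c l * (hyper_fps [a] [] $ n * ffact (of_nat n) l * x ^ n))" for n
  proof -
    have "poly p (of_nat n) = (\<Sum>l<M. c l * ffact (of_nat n) l)"
      unfolding c_def by (rule poly_eq_sum_Stirling_ffact[OF assms(2)])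
    then show ?thesis
      by (simp add: pochhammer_poly_fps_def sum_distrib_left sum_distrib_right sum_divide_distrib mult_ac)
  qed
  ultimately show ?thesis
    by (simp add: c_def mult_ac)
qed

definition vpoch_poly :: "nat \<Rightarrow> (nat \<Rightarrow> complex) \<Rightarrow> (nat \<Rightarrow> nat) \<Rightarrow> complex poly" where
  "vpoch_poly r f m = (\<Prod>i<r. \<Prod>j<m i. [:f i + of_nat j, 1:])"

lemma poly_vpoch_poly: "poly (vpoch_poly r f m) z = vpoch r (\<lambda>i. f i + z) m"
  unfolding vpoch_poly_def vpoch_def poly_prod pochhammer_prod
  by (intro prod.cong refl) (auto simp: atLeast0LessThan algebra_simps)

lemma degree_vpoch_poly: "degree (vpoch_poly r f m) \<le> (\<Sum>i<r. m i)"
proof -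
  have "degree (vpoch_poly r f m) \<le> (\<Sum>i<r. degree (\<Prod>j<m i. [:f i + of_nat j, 1:]))"
    unfolding vpoch_poly_def
    using degree_prod_sum_le[of "{..<r}" "\<lambda>i. \<Prod>j<m i. [:f i + of_nat j, 1:]"] by (simp add: o_def)
  also have "\<dots> \<le> (\<Sum>i<r. m i)"
  proof (rule sum_mono)
    fix i
    show "degree (\<Prod>j<m i. [:f i + of_nat j, 1:]) \<le> m i"
      using degree_prod_sum_le[of "{..<m i}" "\<lambda>j. [:f i + of_nat j, 1:]"] by simp
  qed
  finally show ?thesis .
qed

definition Wpoly_numer :: "nat \<Rightarrow> complex \<Rightarrow> (nat \<Rightarrow> complex) \<Rightarrow> (nat \<Rightarrow> nat) \<Rightarrow> complex poly" where
  "Wpoly_numer r \<beta> f m = vpoch_poly r f m - [:vpoch r (\<lambda>i. f i - \<beta>) m:]"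

lemma Wpoly_conv_numer:
  "Wpoly r \<beta> f m = smult (\<beta> / vpoch r f m) (Wpoly_numer r \<beta> f m div [:\<beta>, 1:])"
  by (simp add: Wpoly_def Wpoly_numer_def vpoch_poly_def)

lemma Wpoly_numer_eq:
  "Wpoly_numer r \<beta> f m = (Wpoly_numer r \<beta> f m div [:\<beta>, 1:]) * [:\<beta>, 1:]"
proof -
  have "poly (Wpoly_numer r \<beta> f m) (- \<beta>) = 0"
    by (simp add: Wpoly_numer_def poly_vpoch_poly)
  then have "[:\<beta>, 1:] dvd Wpoly_numer r \<beta> f m"
    by (simp add: poly_eq_0_iff_dvd)
  then show ?thesis
    by (rule dvd_div_mult_self[symmetric])
qed

lemma poly_Wpoly_mult:
  "(z + \<beta>) * poly (Wpoly r \<beta> f m) z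
     = \<beta> * (vpoch r (\<lambda>i. f i + z) m - vpoch r (\<lambda>i. f i - \<beta>) m) / vpoch r f m"
proof -
  define D where "D = Wpoly_numer r \<beta> f m div [:\<beta>, 1:]"
  have "poly (Wpoly_numer r \<beta> f m) z = (z + \<beta>) * poly D z"
    using arg_cong[OF Wpoly_numer_eq, of "\<lambda>p. poly p z"] by (simp add: D_def algebra_simps)
  then have "(z + \<beta>) * poly (Wpoly r \<beta> f m) z = \<beta> / vpoch r f m * poly (Wpoly_numer r \<beta> f m) z"
    by (simp add: Wpoly_conv_numer D_def)
  then show ?thesis
    by (simp add: Wpoly_numer_def poly_vpoch_poly)
qed

lemma coeff_Wpoly_eq_0:
  assumes "(\<Sum>i<r. m i) \<le> k"
  shows "coeff (Wpoly r \<beta> f m) k = 0"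
proof -
  define D where "D = Wpoly_numer r \<beta> f m div [:\<beta>, 1:]"
  have "degree D < k" if "D \<noteq> 0"
  proof -
    have "degree D + 1 = degree (D * [:\<beta>, 1:])"
      using that by (subst degree_mult_eq) simp_all
    also have "\<dots> = degree (Wpoly_numer r \<beta> f m)"
      unfolding D_def by (rule arg_cong[OF Wpoly_numer_eq[symmetric]])
    also have "\<dots> \<le> (\<Sum>i<r. m i)"
      unfolding Wpoly_numer_def by (rule degree_diff_le[OF degree_vpoch_poly]) simp
    finally show ?thesis
      using assms by simp
  qed
  then have "coeff D k = 0"
    by (cases "D = 0") (simp_all add: coeff_eq_0)
  then show ?thesis
    by (simp add: Wpoly_conv_numer D_def)
qed

lemma sum_Stirling_coeff_Wpoly_combination:
  "(\<Sum>k=l..<(\<Sum>i<r. m i). coeff (smult (b + 1) (Wpoly r b f m) - smult b (Wpoly r (b + 1) f m)) k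
        * of_nat (Stirling k l))
     = (b + 1) * Y r l b f m - b * Y r l (b + 1) f m"
  by (simp add: Y_def delta_def sum_subtractf sum_distrib_left algebra_simps)

lemma prod_list_map_upt: "prod_list (map g [0..<r]) = (\<Prod>i<r. g i)"
  by (simp add: prod.distinct_set_conv_list[symmetric] atLeast0LessThan)

lemma vpoch_plus_1:
  "vpoch r (\<lambda>i. g i + 1) m * (\<Prod>i<r. g i) = vpoch r g m * (\<Prod>i<r. g i + of_nat (m i))"
proof -
  have "pochhammer (g i + 1) (m i) * g i = pochhammer (g i) (m i) * (g i + of_nat (m i))" for i
    by (metis pochhammer_rec pochhammer_rec' add.commute mult.commute)
  then show ?thesis
    unfolding vpoch_def prod.distrib[symmetric] by simp
qed

lemma prod_pochhammer_mult_vpoch: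
  "(\<Prod>i<r. pochhammer (f i + of_nat (m i)) n) * vpoch r f m
     = (\<Prod>i<r. pochhammer (f i) n) * vpoch r (\<lambda>i. f i + of_nat n) m"
  unfolding vpoch_def prod.distrib[symmetric]
  by (intro prod.cong refl) (metis pochhammer_product' add.commute mult.commute)

lemma hyper_fps_shifted_nth:
  assumes f: "\<And>i n. i < r \<Longrightarrow> f i \<noteq> - of_nat n"
  shows "hyper_fps ([a, b] @ map (\<lambda>i. f i + of_nat (m i)) [0..<r]) ([b + 2] @ map f [0..<r]) $ n
     = hyper_fps [a] [] $ n * (pochhammer b n / pochhammer (b + 2) n)
         * (vpoch r (\<lambda>i. f i + of_nat n) m / vpoch r f m)"
proof -
  have "(\<Prod>i<r. pochhammer (f i) n) \<noteq> 0" "vpoch r f m \<noteq> 0"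
    using f by (auto simp: vpoch_def prod_zero_iff pochhammer_eq_0_iff)
  moreover have "(\<Prod>i<r. pochhammer (f i + of_nat (m i)) n)
      = (\<Prod>i<r. pochhammer (f i) n) * vpoch r (\<lambda>i. f i + of_nat n) m / vpoch r f m"
    using prod_pochhammer_mult_vpoch[where r = r and n = n and f = f and m = m] \<open>vpoch r f m \<noteq> 0\<close> by (simp add: field_simps)
  ultimately show ?thesis
    by (simp add: hyper_fps_nth prod_list_map_upt o_def mult_ac)
qed

lemma vpoch_ratio_partial_fraction:
  assumes V: "vpoch r f m \<noteq> 0" and "pochhammer (\<beta> + 1) n \<noteq> 0"
  shows "vpoch r (\<lambda>i. f i + of_nat n) m / vpoch r f m * (pochhammer \<beta> n / pochhammer (\<beta> + 1) n)
       = poly (Wpoly r \<beta> f m) (of_nat n)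
           + vpoch r (\<lambda>i. f i - \<beta>) m / vpoch r f m * (pochhammer \<beta> n / pochhammer (\<beta> + 1) n)"
proof (cases "\<beta> + of_nat n = 0")
  case False
  define P c where "P = vpoch r (\<lambda>i. f i + of_nat n) m" and "c = vpoch r (\<lambda>i. f i - \<beta>) m"
  have "pochhammer \<beta> n / pochhammer (\<beta> + 1) n = \<beta> / (\<beta> + of_nat n)"
    using pochhammer_shift_mult[of \<beta> n] assms(2) False by (simp add: field_simps)
  moreover have "poly (Wpoly r \<beta> f m) (of_nat n) = \<beta> * (P - c) / vpoch r f m / (of_nat n + \<beta>)"
    using poly_Wpoly_mult[of "of_nat n" \<beta> r f m] False V
    unfolding P_def c_def by (simp add: eq_divide_eq add.commute mult_ac)
  moreover have "P / V' * (\<beta> / d) = \<beta> * (P - c) / V' / d + c / V' * (\<beta> / d)"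
    if "d \<noteq> 0" "V' \<noteq> 0" for d V'
    using that by (simp add: field_simps)
  ultimately show ?thesis
    using False V by (simp add: P_def c_def)
next
  case True
  then have "n = 0"
    using assms(2) by (cases n) (auto simp: pochhammer_eq_0_iff algebra_simps eq_neg_iff_add_eq_0)
  then show ?thesis
    using True V by (simp add: Wpoly_def)
qed

lemma hyper_fps_shifted_decomposition:
  fixes r :: nat and m :: "nat \<Rightarrow> nat" and f :: "nat \<Rightarrow> complex" and a b :: complex
  defines "A \<equiv> vpoch r (\<lambda>i. f i - b) m / vpoch r f m"
    and "B \<equiv> vpoch r (\<lambda>i. f i - b - 1) m / vpoch r f m"
  assumes f: "\<And>i n. i < r \<Longrightarrow> f i \<noteq> - of_nat n"
    and b1: "\<And>n. b + 1 \<noteq> - of_nat n" and b2: "\<And>n. b + 2 \<noteq> - of_nat n"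
  shows "hyper_fps ([a, b] @ map (\<lambda>i. f i + of_nat (m i)) [0..<r]) ([b + 2] @ map f [0..<r])
           = pochhammer_poly_fps a (smult (b + 1) (Wpoly r b f m) - smult b (Wpoly r (b + 1) f m))
             + fps_const ((b + 1) * A) * hyper_fps [a, b] [b + 1]
             - fps_const (b * B) * hyper_fps [a, b + 1] [b + 2]"
proof (rule fps_ext)
  fix n
  define P where "P = vpoch r (\<lambda>i. f i + of_nat n) m / vpoch r f m"
  define \<rho>\<^sub>0 \<rho>\<^sub>1 where "\<rho>\<^sub>0 = pochhammer b n / pochhammer (b + 1) n"
    and "\<rho>\<^sub>1 = pochhammer (b + 1) n / pochhammer (b + 2) n"
  have V: "vpoch r f m \<noteq> 0"
    using f by (auto simp: vpoch_def prod_zero_iff pochhammer_eq_0_iff)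
  have "pochhammer (b + 1) n \<noteq> 0" "pochhammer (b + 2) n \<noteq> 0"
    using b1 b2 by (simp_all add: pochhammer_nonzero)
  then have split: "pochhammer b n / pochhammer (b + 2) n = (b + 1) * \<rho>\<^sub>0 - b * \<rho>\<^sub>1"
    unfolding \<rho>\<^sub>0_def \<rho>\<^sub>1_def by (rule pochhammer_ratio_split)
  have W\<^sub>0: "P * \<rho>\<^sub>0 = poly (Wpoly r b f m) (of_nat n) + A * \<rho>\<^sub>0"
    unfolding P_def \<rho>\<^sub>0_def A_def
    by (rule vpoch_ratio_partial_fraction[OF V \<open>pochhammer (b + 1) n \<noteq> 0\<close>])
  have W\<^sub>1: "P * \<rho>\<^sub>1 = poly (Wpoly r (b + 1) f m) (of_nat n) + B * \<rho>\<^sub>1"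
    using vpoch_ratio_partial_fraction[OF V, of "b + 1" n] \<open>pochhammer (b + 2) n \<noteq> 0\<close>
    by (simp add: P_def \<rho>\<^sub>1_def B_def add.assoc diff_diff_eq)
  have "hyper_fps ([a, b] @ map (\<lambda>i. f i + of_nat (m i)) [0..<r]) ([b + 2] @ map f [0..<r]) $ n
      = hyper_fps [a] [] $ n * ((b + 1) * (P * \<rho>\<^sub>0) - b * (P * \<rho>\<^sub>1))"
    by (simp only: hyper_fps_shifted_nth[OF f] split P_def) (simp add: V field_simps)
  also have "\<dots> = hyper_fps [a] [] $ n * ((b + 1) * poly (Wpoly r b f m) (of_nat n)
                                         - b * poly (Wpoly r (b + 1) f m) (of_nat n))
                 + (b + 1) * A * (hyper_fps [a] [] $ n * \<rho>\<^sub>0) - b * B * (hyper_fps [a] [] $ n * \<rho>\<^sub>1)"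
    unfolding W\<^sub>0 W\<^sub>1 by (simp add: algebra_simps add_divide_distrib)
  also have "\<dots> = (pochhammer_poly_fps a (smult (b + 1) (Wpoly r b f m) - smult b (Wpoly r (b + 1) f m))
                   + fps_const ((b + 1) * A) * hyper_fps [a, b] [b + 1]
                   - fps_const (b * B) * hyper_fps [a, b + 1] [b + 2]) $ n"
    by (simp add: pochhammer_poly_fps_def hyper_fps_nth \<rho>\<^sub>0_def \<rho>\<^sub>1_def mult_ac)
  finally show "hyper_fps ([a, b] @ map (\<lambda>i. f i + of_nat (m i)) [0..<r]) ([b + 2] @ map f [0..<r]) $ n
      = (pochhammer_poly_fps a (smult (b + 1) (Wpoly r b f m) - smult b (Wpoly r (b + 1) f m))
         + fps_const ((b + 1) * A) * hyper_fps [a, b] [b + 1]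
         - fps_const (b * B) * hyper_fps [a, b + 1] [b + 2]) $ n" .
qed

lemma hyper_fps_euler_images_combination:
  fixes b e A B lam :: complex
  defines "C \<equiv> (b + 1) * A - b * B"
  assumes b1: "\<And>n. b + 1 \<noteq> - of_nat n" and b2: "\<And>n. b + 2 \<noteq> - of_nat n"
    and e: "e \<noteq> 0" and lam: "\<And>n. lam \<noteq> - of_nat n"
    and rel: "C / lam = A - b * B / e"
  shows "fps_const ((b + 1) * A) * hyper_fps [1, e] [b + 1] - fps_const (b * B) * hyper_fps [1, e + 1] [b + 2]
           = fps_const C * hyper_fps [1, e, lam + 1] [b + 2, lam]"
proof (rule fps_ext)
  fix n
  define \<rho> where "\<rho> = pochhammer e n / pochhammer (b + 2) n"
  have "pochhammer (b + 1) n \<noteq> 0" "pochhammer (b + 2) n \<noteq> 0" "pochhammer lam n \<noteq> 0" "lam \<noteq> 0"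
    using b1 b2 lam lam[of 0] by (simp_all add: pochhammer_nonzero)
  have "b + 1 \<noteq> 0" "b + 1 + of_nat n \<noteq> 0"
    using b1[of 0] b1[of n] by (auto simp: add_eq_0_iff2)
  have U\<^sub>0: "(b + 1) * hyper_fps [1, e] [b + 1] $ n = (b + 1 + of_nat n) * \<rho>"
    using pochhammer_plus_1_eq[OF \<open>b + 1 \<noteq> 0\<close>, of n] \<open>pochhammer (b + 1) n \<noteq> 0\<close>
      \<open>b + 1 + of_nat n \<noteq> 0\<close> \<open>b + 1 \<noteq> 0\<close>
    by (simp add: hyper_fps_Cons_1_nth \<rho>_def add.assoc)
  have U\<^sub>1: "hyper_fps [1, e + 1] [b + 2] $ n = (e + of_nat n) / e * \<rho>"
    using pochhammer_plus_1_eq[of e n] e by (simp add: hyper_fps_Cons_1_nth \<rho>_def)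
  have H: "hyper_fps [1, e, lam + 1] [b + 2, lam] $ n = (1 + of_nat n / lam) * \<rho>"
    using \<open>pochhammer lam n \<noteq> 0\<close> \<open>lam \<noteq> 0\<close>
    by (simp add: hyper_fps_Cons_1_nth \<rho>_def pochhammer_plus_1_eq) (simp add: field_simps)
  have "C * (1 + of_nat n / lam) = C + of_nat n * (C / lam)"
    by (simp add: algebra_simps)
  also have "\<dots> = A * (b + 1 + of_nat n) - b * B * ((e + of_nat n) / e)"
    unfolding rel using e by (simp add: C_def field_simps)
  finally have coeff: "C * (1 + of_nat n / lam) = A * (b + 1 + of_nat n) - b * B * ((e + of_nat n) / e)" .
  have "(fps_const ((b + 1) * A) * hyper_fps [1, e] [b + 1] - fps_const (b * B) * hyper_fps [1, e + 1] [b + 2]) $ n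
      = A * ((b + 1) * hyper_fps [1, e] [b + 1] $ n) - b * B * hyper_fps [1, e + 1] [b + 2] $ n"
    by (simp add: algebra_simps)
  also have "\<dots> = (A * (b + 1 + of_nat n) - b * B * ((e + of_nat n) / e)) * \<rho>"
    unfolding U\<^sub>0 U\<^sub>1 by (simp add: algebra_simps)
  also have "\<dots> = (fps_const C * hyper_fps [1, e, lam + 1] [b + 2, lam]) $ n"
    unfolding coeff[symmetric] fps_mult_left_const_nth H by (rule mult.assoc)
  finally show "(fps_const ((b + 1) * A) * hyper_fps [1, e] [b + 1]
      - fps_const (b * B) * hyper_fps [1, e + 1] [b + 2]) $ n
      = (fps_const C * hyper_fps [1, e, lam + 1] [b + 2, lam]) $ n" .
qed

lemma hyper_fps_2_1_combination:
  fixes a b A B lam :: complex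
  defines "C \<equiv> (b + 1) * A - b * B"
  assumes b1: "\<And>n. b + 1 \<noteq> - of_nat n" and b2: "\<And>n. b + 2 \<noteq> - of_nat n"
    and e: "b + 1 - a \<noteq> 0" and lam: "\<And>n. lam \<noteq> - of_nat n"
    and rel: "C / lam = A - b * B / (b + 1 - a)"
  shows "fps_const ((b + 1) * A) * hyper_fps [a, b] [b + 1] - fps_const (b * B) * hyper_fps [a, b + 1] [b + 2]
           = fps_const C * (hyper_fps [a - 1] [] * hyper_fps [1, b + 1 - a, lam + 1] [b + 2, lam])"
proof -
  define e where "e = b + 1 - a"
  have "e \<noteq> 0" "C / lam = A - b * B / e"
    using e rel by (simp_all add: e_def)
  then have U: "fps_const ((b + 1) * A) * hyper_fps [1, e] [b + 1] - fps_const (b * B) * hyper_fps [1, e + 1] [b + 2]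
      = fps_const C * hyper_fps [1, e, lam + 1] [b + 2, lam]"
    unfolding C_def by (rule hyper_fps_euler_images_combination[OF b1 b2 _ lam])
  have T\<^sub>0: "hyper_fps [a, b] [b + 1] = hyper_fps [a - 1] [] * hyper_fps [1, e] [b + 1]"
    unfolding e_def by (rule hyper_fps_euler_transform[OF b1])
  have T\<^sub>1: "hyper_fps [a, b + 1] [b + 2] = hyper_fps [a - 1] [] * hyper_fps [1, e + 1] [b + 2]"
    using hyper_fps_euler_transform[of "b + 1" a] b2 by (simp add: e_def algebra_simps)
  have "fps_const ((b + 1) * A) * hyper_fps [a, b] [b + 1] - fps_const (b * B) * hyper_fps [a, b + 1] [b + 2]
      = hyper_fps [a - 1] [] * (fps_const ((b + 1) * A) * hyper_fps [1, e] [b + 1]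
                                - fps_const (b * B) * hyper_fps [1, e + 1] [b + 2])"
    unfolding T\<^sub>0 T\<^sub>1 by (simp only: right_diff_distrib mult.left_commute)
  also have "\<dots> = fps_const C * (hyper_fps [a - 1] [] * hyper_fps [1, e, lam + 1] [b + 2, lam])"
    unfolding U by (rule mult.left_commute)
  finally show ?thesis
    unfolding e_def .
qed

lemma hyper_fps_1_0_mult_3_2_degenerate:
  assumes lam: "\<And>n. lam \<noteq> - of_nat n"
  shows "hyper_fps [a - 1] [] * hyper_fps [1, - a, lam + 1] [1, lam] = 1 - fps_const (1 + a / lam) * fps_X"
proof -
  have "lam \<noteq> 0"
    using lam[of 0] by simp
  have H: "hyper_fps [1, - a, lam + 1] [1, lam]
      = hyper_fps [- a] [] + fps_const (1 / lam) * (fps_X * fps_deriv (hyper_fps [- a] []))"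
  proof (rule fps_ext)
    fix n
    have "pochhammer lam n \<noteq> 0"
      using lam by (rule pochhammer_nonzero)
    then show "hyper_fps [1, - a, lam + 1] [1, lam] $ n
        = (hyper_fps [- a] [] + fps_const (1 / lam) * (fps_X * fps_deriv (hyper_fps [- a] []))) $ n"
      using \<open>lam \<noteq> 0\<close>
      by (simp add: hyper_fps_Cons_1_nth pochhammer_plus_1_eq)
        (simp add: fps_X_mult_fps_deriv_nth field_simps flip: pochhammer_fact)
  qed
  have deriv: "fps_deriv (hyper_fps [- a] []) = fps_const (- a) * hyper_fps [1 - a] []"
    using fps_deriv_hyper_fps_1_0[of "- a"] by simp
  have "hyper_fps [a - 1] [] * hyper_fps [1, - a, lam + 1] [1, lam]
      = hyper_fps [a - 1] [] * hyper_fps [- a] []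
        + fps_const (1 / lam) * fps_const (- a) * fps_X * (hyper_fps [a - 1] [] * hyper_fps [1 - a] [])"
    unfolding H deriv by (simp only: distrib_left mult_ac)
  also have "\<dots> = 1 - fps_X - fps_const (a / lam) * fps_X"
    using one_minus_X_mult_hyper_fps_1_0[of 0] by (simp add: hyper_fps_1_0_mult hyper_fps_1_0_zero)
  also have "\<dots> = 1 - fps_const (1 + a / lam) * fps_X"
    by (simp add: algebra_simps flip: fps_const_add)
  finally show ?thesis .
qed

lemma hyper_fps_shifted_minus_1:
  assumes f: "\<And>i n. i < r \<Longrightarrow> f i \<noteq> - of_nat n"
  shows "hyper_fps ([a, - 1] @ map (\<lambda>i. f i + of_nat (m i)) [0..<r]) ([1] @ map f [0..<r])
           = 1 - fps_const (a * vpoch r (\<lambda>i. f i + 1) m / vpoch r f m) * fps_X"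
proof (rule fps_ext)
  fix n :: nat
  have V: "vpoch r f m \<noteq> 0"
    using f by (auto simp: vpoch_def prod_zero_iff pochhammer_eq_0_iff)
  have F_nth: "hyper_fps ([a, - 1] @ map (\<lambda>i. f i + of_nat (m i)) [0..<r]) ([1] @ map f [0..<r]) $ n
      = hyper_fps [a] [] $ n * (pochhammer (- 1) n / pochhammer 1 n)
          * (vpoch r (\<lambda>i. f i + of_nat n) m / vpoch r f m)"
    using hyper_fps_shifted_nth[OF f, where a = a and b = "- 1" and m = m and n = n] by simp
  consider "n = 0" | "n = 1" | "n \<ge> 2"
    by linarith
  then have "hyper_fps [a] [] $ n * (pochhammer (- 1) n / pochhammer 1 n)
      * (vpoch r (\<lambda>i. f i + of_nat n) m / vpoch r f m)
      = (1 - fps_const (a * vpoch r (\<lambda>i. f i + 1) m / vpoch r f m) * fps_X) $ n"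
  proof cases
    case 3
    then have "pochhammer (- 1 :: complex) n = 0"
      unfolding pochhammer_eq_0_iff by (intro exI[of _ 1]) simp
    then show ?thesis
      using 3 by simp
  qed (use V in simp_all)
  then show "hyper_fps ([a, - 1] @ map (\<lambda>i. f i + of_nat (m i)) [0..<r]) ([1] @ map f [0..<r]) $ n
      = (1 - fps_const (a * vpoch r (\<lambda>i. f i + 1) m / vpoch r f m) * fps_X) $ n"
    by (simp only: F_nth)
qed

lemma lambda_star_relation:
  fixes A B b e lam \<Pi>\<^sub>0 \<Pi>\<^sub>1 :: complex
  assumes rel: "A * \<Pi>\<^sub>0 = B * \<Pi>\<^sub>1" and e: "e \<noteq> 0"
    and h1: "(b + 1) * \<Pi>\<^sub>1 \<noteq> b * \<Pi>\<^sub>0" and h2: "e * \<Pi>\<^sub>1 \<noteq> b * \<Pi>\<^sub>0"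
    and lam: "lam = e * ((b + 1) * \<Pi>\<^sub>1 - b * \<Pi>\<^sub>0) / (e * \<Pi>\<^sub>1 - b * \<Pi>\<^sub>0)"
  shows "((b + 1) * A - b * B) / lam = A - b * B / e"
proof -
  have "(b + 1) * \<Pi>\<^sub>1 - b * \<Pi>\<^sub>0 \<noteq> 0"
    using h1 by simp
  have "((b + 1) * A - b * B) * (e * \<Pi>\<^sub>1 - b * \<Pi>\<^sub>0)
      = ((b + 1) * \<Pi>\<^sub>1 - b * \<Pi>\<^sub>0) * (e * A - b * B) + b * (e - b - 1) * (A * \<Pi>\<^sub>0 - B * \<Pi>\<^sub>1)"
    by (simp add: algebra_simps)
  also have "\<dots> = ((b + 1) * \<Pi>\<^sub>1 - b * \<Pi>\<^sub>0) * (e * A - b * B)"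
    by (simp add: rel)
  finally have "((b + 1) * A - b * B) / lam
      = ((b + 1) * \<Pi>\<^sub>1 - b * \<Pi>\<^sub>0) * (e * A - b * B) / (e * ((b + 1) * \<Pi>\<^sub>1 - b * \<Pi>\<^sub>0))"
    by (simp add: lam)
  also have "\<dots> = (e * A - b * B) / e"
    using \<open>(b + 1) * \<Pi>\<^sub>1 - b * \<Pi>\<^sub>0 \<noteq> 0\<close> by simp
  also have "\<dots> = A - b * B / e"
    using e by (simp add: field_simps)
  finally show ?thesis .
qed

lemma hyper_fps_shifted_identity:
  fixes r :: nat and m :: "nat \<Rightarrow> nat" and f :: "nat \<Rightarrow> complex" and a b :: complex
  defines "\<Pi>\<^sub>1 \<equiv> (\<Prod>i<r. f i - b - 1 + of_nat (m i))" and "\<Pi>\<^sub>0 \<equiv> (\<Prod>i<r. f i - b - 1)"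
  defines "lam \<equiv> (b - a + 1) * ((b + 1) * \<Pi>\<^sub>1 - b * \<Pi>\<^sub>0) / ((b - a + 1) * \<Pi>\<^sub>1 - b * \<Pi>\<^sub>0)"
    and "C \<equiv> ((b + 1) * vpoch r (\<lambda>i. f i - b) m - b * vpoch r (\<lambda>i. f i - b - 1) m) / vpoch r f m"
  assumes h1: "(b + 1) * \<Pi>\<^sub>1 \<noteq> b * \<Pi>\<^sub>0" and h2: "(b - a + 1) * \<Pi>\<^sub>1 \<noteq> b * \<Pi>\<^sub>0"
    and b2: "\<And>n. b + 2 \<noteq> - of_nat n" and f: "\<And>i n. i < r \<Longrightarrow> f i \<noteq> - of_nat n"
    and lam: "\<And>n. lam \<noteq> - of_nat n"
  shows "hyper_fps ([a, b] @ map (\<lambda>i. f i + of_nat (m i)) [0..<r]) ([b + 2] @ map f [0..<r])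
           = pochhammer_poly_fps a (smult (b + 1) (Wpoly r b f m) - smult b (Wpoly r (b + 1) f m))
             + fps_const C * (hyper_fps [a - 1] [] * hyper_fps [1, b + 1 - a, lam + 1] [b + 2, lam])"
proof -
  define A B where "A = vpoch r (\<lambda>i. f i - b) m / vpoch r f m"
    and "B = vpoch r (\<lambda>i. f i - b - 1) m / vpoch r f m"
  have V: "vpoch r f m \<noteq> 0"
    using f by (auto simp: vpoch_def prod_zero_iff pochhammer_eq_0_iff)
  have C: "C = (b + 1) * A - b * B"
    by (simp add: C_def A_def B_def diff_divide_distrib)
  have e: "b + 1 - a \<noteq> 0"
    using lam[of 0] by (auto simp: lam_def algebra_simps)
  have "A * \<Pi>\<^sub>0 = B * \<Pi>\<^sub>1"
    using vpoch_plus_1[of r "\<lambda>i. f i - b - 1" m] V by (simp add: A_def B_def \<Pi>\<^sub>0_def \<Pi>\<^sub>1_def field_simps)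
  then have rel: "C / lam = A - b * B / (b + 1 - a)"
    unfolding C by (rule lambda_star_relation[OF _ e]) (use h1 h2 in \<open>simp_all add: lam_def algebra_simps\<close>)
  show ?thesis
  proof (cases "b = -1")
    case True
    have "a \<noteq> 0" "B = 1" "C = 1"
      using e V True by (simp_all add: B_def C_def)
    then have "a * A = 1 + a / lam"
      using rel True by (simp add: C field_simps)
    then have "hyper_fps ([a, b] @ map (\<lambda>i. f i + of_nat (m i)) [0..<r]) ([b + 2] @ map f [0..<r])
        = 1 - fps_const (1 + a / lam) * fps_X"
      using hyper_fps_shifted_minus_1[OF f, where a = a and m = m] True by (simp add: A_def)
    moreover have "pochhammer_poly_fps a (smult (b + 1) (Wpoly r b f m) - smult b (Wpoly r (b + 1) f m)) = 0"
      by (rule fps_ext) (simp add: pochhammer_poly_fps_def True Wpoly_def)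
    moreover have "hyper_fps [1, b + 1 - a, lam + 1] [b + 2, lam] = hyper_fps [1, - a, lam + 1] [1, lam]"
      using True by simp
    ultimately show ?thesis
      using \<open>C = 1\<close> by (simp add: hyper_fps_1_0_mult_3_2_degenerate[OF lam])
  next
    case False
    have b1: "b + 1 \<noteq> - of_nat n" for n
      using False b2 by (rule plus_1_neq_minus_of_nat)
    have "hyper_fps ([a, b] @ map (\<lambda>i. f i + of_nat (m i)) [0..<r]) ([b + 2] @ map f [0..<r])
        = pochhammer_poly_fps a (smult (b + 1) (Wpoly r b f m) - smult b (Wpoly r (b + 1) f m))
          + (fps_const ((b + 1) * A) * hyper_fps [a, b] [b + 1]
             - fps_const (b * B) * hyper_fps [a, b + 1] [b + 2])"
      by (simp only: hyper_fps_shifted_decomposition[OF f b1 b2] A_def B_def add_diff_eq)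
    then show ?thesis
      unfolding hyper_fps_2_1_combination[OF b1 b2 e lam rel[unfolded C]] C .
  qed
qed

lemma powr_diff_1_mult_powr_minus:
  fixes z :: complex
  assumes "z \<noteq> 0"
  shows "z powr (a - 1) * (c * z powr (- (a + of_nat l))) = c / z ^ (l + 1)"
proof -
  have "z powr (a - 1) * z powr (- (a + of_nat l)) = z powr (- of_nat (l + 1))"
    by (simp add: powr_add[symmetric] algebra_simps)
  also have "\<dots> = 1 / z ^ (l + 1)"
    using assms powr_nat'[of z "l + 1"] by (simp only: powr_minus_divide) simp
  finally show ?thesis
    by (metis mult.left_commute mult.right_neutral times_divide_eq_right)
qed

lemma hyperF_eq_from_fps_decomposition:
  assumes decomposition: "hyper_fps as bs = pochhammer_poly_fps a W + fps_const C * (hyper_fps [a - 1] [] * hyper_fps cs ds)"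
    and W: "\<And>k. M \<le> k \<Longrightarrow> coeff W k = 0"
    and len: "length cs = Suc (length ds)" and poles: "\<And>c n. c \<in> set ds \<Longrightarrow> c \<noteq> - of_nat n"
    and x: "norm x < 1"
  shows "(1 - x) powr (a - 1) * hyperF as bs x
           = C * hyperF cs ds x + (\<Sum>l<M. (\<Sum>k=l..<M. coeff W k * of_nat (Stirling k l))
                                          * pochhammer a l * x ^ l / (1 - x) ^ (l + 1))"
proof -
  define Q where "Q = (\<Sum>l<M. (\<Sum>k=l..<M. coeff W k * of_nat (Stirling k l))
                              * pochhammer a l * x ^ l * (1 - x) powr (- (a + of_nat l)))"
  have "(\<lambda>n. (hyper_fps [a - 1] [] * hyper_fps cs ds) $ n * x ^ n)
      sums ((1 - x) powr (1 - a) * hyperF cs ds x)"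
  proof -
    have "summable (\<lambda>n. norm (hyper_fps [a - 1] [] $ n * x ^ n))"
      by (rule summable_norm_hyper_fps[OF _ _ x]) simp_all
    moreover have "summable (\<lambda>n. norm (hyper_fps cs ds $ n * x ^ n))"
      by (rule summable_norm_hyper_fps[OF len poles x])
    ultimately show ?thesis
      using fps_mult_sums hyper_fps_1_0_sums[OF x, of "a - 1"] by (simp add: hyperF_conv_hyper_fps sums_iff)
  qed
  from sums_add[OF pochhammer_poly_fps_sums[OF x W] sums_mult[OF this, of C]]
  have "(\<lambda>n. hyper_fps as bs $ n * x ^ n) sums (Q + C * ((1 - x) powr (1 - a) * hyperF cs ds x))"
    unfolding decomposition Q_def by (simp add: distrib_right mult.assoc)
  then have "(1 - x) powr (a - 1) * hyperF as bs x = (1 - x) powr (a - 1) * Q + C * hyperF cs ds x"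
    using x by (auto simp: hyperF_conv_hyper_fps sums_iff algebra_simps simp flip: powr_add)
  also have "(1 - x) powr (a - 1) * Q
      = (\<Sum>l<M. (\<Sum>k=l..<M. coeff W k * of_nat (Stirling k l)) * pochhammer a l * x ^ l / (1 - x) ^ (l + 1))"
    using x unfolding Q_def sum_distrib_left by (intro sum.cong refl powr_diff_1_mult_powr_minus) auto
  finally show ?thesis
    by (simp only: add.commute)
qed

theorem corollary3:
  fixes r :: nat and m :: "nat \<Rightarrow> nat" and f :: "nat \<Rightarrow> complex"
    and a b x :: complex
  defines "M \<equiv> (\<Sum>i<r. m i)"
  defines "\<Pi>1 \<equiv> (\<Prod>i<r. f i - b - 1 + of_nat (m i))"
  defines "\<Pi>0 \<equiv> (\<Prod>i<r. f i - b - 1)"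
  defines "lam \<equiv> (b - a + 1) * ((b + 1) * \<Pi>1 - b * \<Pi>0) / ((b - a + 1) * \<Pi>1 - b * \<Pi>0)"
  assumes "r \<ge> 1"
    and "(b + 1) * \<Pi>1 \<noteq> b * \<Pi>0"
    and "(b - a + 1) * \<Pi>1 \<noteq> b * \<Pi>0"
    and "\<And>n::nat. b + 2 \<noteq> - of_nat n"
    and "\<And>i n::nat. i < r \<Longrightarrow> f i \<noteq> - of_nat n"
    and "\<And>n::nat. lam \<noteq> - of_nat n"
    and "norm x < 1"
  shows "(1 - x) powr (a - 1) *
           hyperF ([a, b] @ map (\<lambda>i. f i + of_nat (m i)) [0..<r]) ([b + 2] @ map f [0..<r]) x
         = ((b + 1) * vpoch r (\<lambda>i. f i - b) m - b * vpoch r (\<lambda>i. f i - b - 1) m) / vpoch r f m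
             * hyperF [1, b + 1 - a, lam + 1] [b + 2, lam] x
           + (\<Sum>l<M. ((b + 1) * Y r l b f m - b * Y r l (b + 1) f m)
                       * pochhammer a l * x ^ l / (1 - x) ^ (l + 1))"
proof -
  have "hyper_fps ([a, b] @ map (\<lambda>i. f i + of_nat (m i)) [0..<r]) ([b + 2] @ map f [0..<r])
      = pochhammer_poly_fps a (smult (b + 1) (Wpoly r b f m) - smult b (Wpoly r (b + 1) f m))
        + fps_const (((b + 1) * vpoch r (\<lambda>i. f i - b) m - b * vpoch r (\<lambda>i. f i - b - 1) m) / vpoch r f m)
          * (hyper_fps [a - 1] [] * hyper_fps [1, b + 1 - a, lam + 1] [b + 2, lam])"
    using assms(6-10) unfolding lam_def \<Pi>1_def \<Pi>0_def by (rule hyper_fps_shifted_identity)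
  then have "(1 - x) powr (a - 1)
      * hyperF ([a, b] @ map (\<lambda>i. f i + of_nat (m i)) [0..<r]) ([b + 2] @ map f [0..<r]) x
      = ((b + 1) * vpoch r (\<lambda>i. f i - b) m - b * vpoch r (\<lambda>i. f i - b - 1) m) / vpoch r f m
          * hyperF [1, b + 1 - a, lam + 1] [b + 2, lam] x
        + (\<Sum>l<M. (\<Sum>k=l..<M. coeff (smult (b + 1) (Wpoly r b f m) - smult b (Wpoly r (b + 1) f m)) k
                    * of_nat (Stirling k l)) * pochhammer a l * x ^ l / (1 - x) ^ (l + 1))"
    by (rule hyperF_eq_from_fps_decomposition)
      (use assms(8,10,11) in \<open>auto simp: M_def coeff_Wpoly_eq_0 dest: sym\<close>)
  then show ?thesis
    unfolding M_def sum_Stirling_coeff_Wpoly_combination .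
qed

end
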